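(* Let $k\ge 1$ and let $0\le b_0<b_1<\dots<b_k$ and $r_0>r_1>\dots>r_k=0$ be reals, let $s_i=\frac{b_i-b_{i-1}}{r_{i-1}-r_i}$ for $1\le i\le k$, and assume $s_1<\dots<s_k$. Let $p^i_1(t)=\min\{1,(e^{t/s_i}-1)/(e-1)\}$ for $1\le i\le k$, and define the profile $\hat p=(\hat p_0,\dots,\hat p_k)$ by $\hat p_0=1-p^1_1$, $\hat p_i=p^i_1-p^{i+1}_1$ for $1\le i\le k-1$, $\hat p_k=p^k_1$. Then for every $t\ge 0$, $$X_{\hat p}(t)\le \frac{e}{e-1}\,\textsc{opt}(t),$$ i.e. the expected cost of the online strategy with profile $\hat p$ is at most $\frac{e}{e-1}$ times the optimal offline cost, for every termination time $t$.
   Context: Additive multislope ski rental: states $0,\dots,k$, state $i$ has buying cost $b_i$ and rental rate $r_i$; holding state $i$ for duration $t$ costs $b_i+r_i t$, and moving from state $i$ to state $j>i$ costs $b_j-b_i$. The optimal offline cost for a game of length $t$ is $\textsc{opt}(t)=\min_i(b_i+r_it)$. For a profile $p=(p_0(t),\dots,p_k(t))$ (nonnegative functions summing to $1$ for every $t$, $p_i(t)$ being the probability of being in state $i$ at time $t$), the expected buying cost is $B_p(t)=\sum_i p_i(t)b_i$, the expected rental rate is $R_p(t)=\sum_ip_i(t)r_i$, and the expected total cost up to time $t$ is $X_p(t)=B_p(t)+\int_0^tR_p(z)\,dz$. *)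

theory Defs
  imports "HOL-Analysis.Analysis"
begin

text \<open>Additive multislope ski rental with states 0..k, buying costs b i, rental rates r i.
  A profile is a function p :: nat => real => real, p i t = probability of being in state i at time t.\<close>

definition opt_cost :: "nat \<Rightarrow> (nat \<Rightarrow> real) \<Rightarrow> (nat \<Rightarrow> real) \<Rightarrow> real \<Rightarrow> real" where
  "opt_cost k b r t = (MIN i\<in>{0..k}. b i + r i * t)"

definition exp_buy :: "nat \<Rightarrow> (nat \<Rightarrow> real) \<Rightarrow> (nat \<Rightarrow> real \<Rightarrow> real) \<Rightarrow> real \<Rightarrow> real" where
  "exp_buy k b p t = (\<Sum>i\<in>{0..k}. p i t * b i)"

definition exp_rate :: "nat \<Rightarrow> (nat \<Rightarrow> real) \<Rightarrow> (nat \<Rightarrow> real \<Rightarrow> real) \<Rightarrow> real \<Rightarrow> real" where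
  "exp_rate k r p t = (\<Sum>i\<in>{0..k}. p i t * r i)"

definition exp_total :: "nat \<Rightarrow> (nat \<Rightarrow> real) \<Rightarrow> (nat \<Rightarrow> real) \<Rightarrow> (nat \<Rightarrow> real \<Rightarrow> real) \<Rightarrow> real \<Rightarrow> real" where
  "exp_total k b r p t = exp_buy k b p t + integral {0..t} (\<lambda>z. exp_rate k r p z)"

definition slope :: "(nat \<Rightarrow> real) \<Rightarrow> (nat \<Rightarrow> real) \<Rightarrow> nat \<Rightarrow> real" where
  "slope b r i = (b i - b (i - 1)) / (r (i - 1) - r i)"

definition p1 :: "(nat \<Rightarrow> real) \<Rightarrow> (nat \<Rightarrow> real) \<Rightarrow> nat \<Rightarrow> real \<Rightarrow> real" where
  "p1 b r i t = min 1 ((exp (t / slope b r i) - 1) / (exp 1 - 1))"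

definition hat_profile :: "nat \<Rightarrow> (nat \<Rightarrow> real) \<Rightarrow> (nat \<Rightarrow> real) \<Rightarrow> nat \<Rightarrow> real \<Rightarrow> real" where
  "hat_profile k b r i t =
     (if i = 0 then 1 - p1 b r 1 t
      else if i < k then p1 b r i t - p1 b r (i + 1) t
      else if i = k then p1 b r k t
      else 0)"

end

theory Submission imports Defs begin

text \<open>Summation by parts shows that \<open>hat_profile\<close> is a superposition of \<open>k\<close> classical
  two-state ski rentals: the \<open>i\<close>-th one buys at price \<open>s\<^sub>i\<close> against rent rate
  \<open>r\<^sub>i\<^sub>-\<^sub>1 - r\<^sub>i\<close> with the exponential strategy \<open>p\<^sup>i\<^sub>1\<close>, whose expected cost is exactly
  \<open>e/(e-1) \<cdot> min s\<^sub>i t\<close>. Hence \<open>X(t) = b\<^sub>0 + e/(e-1) \<cdot> \<Sum>\<^sub>i (r\<^sub>i\<^sub>-\<^sub>1 - r\<^sub>i) min s\<^sub>i t\<close>, and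
  bounding the minimum by \<open>s\<^sub>i\<close> for \<open>i \<le> j\<close> and by \<open>t\<close> otherwise shows the sum is at most
  \<open>b\<^sub>j - b\<^sub>0 + r\<^sub>j t\<close> for every state \<open>j\<close>.\<close>

definition exp_ramp :: "real \<Rightarrow> real \<Rightarrow> real" where
  "exp_ramp s x = min 1 ((exp (x / s) - 1) / (exp 1 - 1))"

lemma p1_eq_exp_ramp: "p1 b r i = exp_ramp (slope b r i)"
  by (simp add: fun_eq_iff p1_def exp_ramp_def)

lemma exp_ramp_below:
  assumes "s > 0" and "x \<le> s"
  shows "exp_ramp s x = (exp (x / s) - 1) / (exp 1 - 1)"
proof -
  have "exp (x / s) \<le> exp 1"
    using assms by (simp add: divide_le_eq)
  then show ?thesis
    by (simp add: exp_ramp_def divide_le_eq)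
qed

lemma exp_ramp_above:
  assumes "s > 0" and "s \<le> x"
  shows "exp_ramp s x = 1"
proof -
  have "exp 1 \<le> exp (x / s)"
    using assms by (simp add: le_divide_eq)
  then show ?thesis
    by (simp add: exp_ramp_def le_divide_eq)
qed

lemma has_integral_one_minus_exp_ramp_below:
  assumes s: "s > 0" and u: "0 \<le> u" "u \<le> s"
  shows "((\<lambda>x. 1 - exp_ramp s x) has_integral
           (exp 1 * u - s * (exp (u / s) - 1)) / (exp 1 - 1)) {0..u}"
proof -
  define F where "F x = (exp 1 * x - s * (exp (x / s) - 1)) / (exp 1 - 1)" for x
  have "(F has_real_derivative (exp 1 - exp (x / s)) / (exp 1 - 1)) (at x)" for x
  proof -
    have "((\<lambda>x. exp 1 * x - s * (exp (x / s) - 1)) has_real_derivative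
            exp 1 * 1 - s * (exp (x / s) * (1 / s) - 0)) (at x)"
      by (intro DERIV_diff DERIV_cmult DERIV_fun_exp DERIV_cdivide DERIV_ident DERIV_const)
    then have "((\<lambda>x. exp 1 * x - s * (exp (x / s) - 1)) has_real_derivative
            exp 1 - exp (x / s)) (at x)"
      using s by simp
    then show ?thesis
      unfolding F_def by (rule DERIV_cdivide)
  qed
  then have "((\<lambda>x. (exp 1 - exp (x / s)) / (exp 1 - 1)) has_integral F u - F 0) {0..u}"
    using u by (intro fundamental_theorem_of_calculus)
      (auto simp: has_real_derivative_iff_has_vector_derivative[symmetric]
            intro: has_field_derivative_at_within)
  moreover have "1 - exp_ramp s x = (exp 1 - exp (x / s)) / (exp 1 - 1)" if "x \<in> {0..u}" for x
  proof -
    have "exp 1 - 1 \<noteq> (0::real)"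
      by simp
    then show ?thesis
      using that u s by (simp add: exp_ramp_below[of s x] divide_simps)
  qed
  moreover have "F u - F 0 = (exp 1 * u - s * (exp (u / s) - 1)) / (exp 1 - 1)"
    by (simp add: F_def)
  ultimately show ?thesis
    by (metis (no_types, lifting) has_integral_cong)
qed

text \<open>Classical randomized ski rental with buying price \<open>s\<close> and rent rate 1: buying with
  probability \<open>exp_ramp s t\<close> by time \<open>t\<close> costs \<open>s \<cdot> exp_ramp s t\<close> plus this rent.\<close>

lemma has_integral_one_minus_exp_ramp:
  assumes s: "s > 0" and t: "t \<ge> 0"
  shows "((\<lambda>x. 1 - exp_ramp s x) has_integral
           exp 1 / (exp 1 - 1) * min s t - s * exp_ramp s t) {0..t}"
proof (cases "t \<le> s")
  case True
  have "exp 1 / (exp 1 - 1) * t - s * exp_ramp s t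
          = (exp 1 * t - s * (exp (t / s) - 1)) / (exp 1 - 1)"
    unfolding exp_ramp_below[OF s True] by (simp add: divide_simps)
  then show ?thesis
    using has_integral_one_minus_exp_ramp_below[OF s t True] True by simp
next
  case False
  have "exp 1 - 1 \<noteq> (0::real)"
    by simp
  have "((\<lambda>x. 1 - exp_ramp s x) has_integral s / (exp 1 - 1)) {0..s}"
    using has_integral_one_minus_exp_ramp_below[of s s] s by (simp add: algebra_simps)
  moreover have "((\<lambda>x. 1 - exp_ramp s x) has_integral 0) {s..t}"
    by (rule has_integral_eq[OF _ has_integral_0]) (use s in \<open>simp add: exp_ramp_above\<close>)
  ultimately have "((\<lambda>x. 1 - exp_ramp s x) has_integral s / (exp 1 - 1)) {0..t}"
    using has_integral_combine[of 0 s t] s False by fastforce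
  moreover have "exp 1 / (exp 1 - 1) * s - s * exp_ramp s t = s / (exp 1 - 1)"
    using \<open>exp 1 - 1 \<noteq> 0\<close> exp_ramp_above[of s t] s False by (simp add: divide_simps algebra_simps)
  ultimately show ?thesis
    using False by simp
qed

lemma sum_diff_mult_by_parts:
  fixes Q x :: "nat \<Rightarrow> 'a :: comm_ring"
  shows "(\<Sum>i=0..k. (Q i - Q (Suc i)) * x i)
           = Q 0 * x 0 + (\<Sum>i=1..k. Q i * (x i - x (i - 1))) - Q (Suc k) * x k"
  by (induction k) (simp_all add: algebra_simps)

lemma sum_hat_profile:
  assumes "k \<ge> 1"
  shows "(\<Sum>i=0..k. hat_profile k b r i z * x i)
           = x 0 + (\<Sum>i=1..k. p1 b r i z * (x i - x (i - 1)))"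
proof -
  define Q where "Q i = (if i = 0 then 1 else if i \<le> k then p1 b r i z else 0)" for i
  have "(\<Sum>i=0..k. hat_profile k b r i z * x i) = (\<Sum>i=0..k. (Q i - Q (Suc i)) * x i)"
    using assms by (intro sum.cong) (auto simp: hat_profile_def Q_def)
  also have "\<dots> = x 0 + (\<Sum>i=1..k. p1 b r i z * (x i - x (i - 1)))"
    unfolding sum_diff_mult_by_parts by (auto simp: Q_def intro!: sum.cong)
  finally show ?thesis .
qed

lemma step_rel_pred:
  fixes i k :: nat
  assumes "\<And>i. i < k \<Longrightarrow> R i (i + 1)" and "1 \<le> i" and "i \<le> k"
  shows "R (i - 1) i"
  using assms(1)[of "i - 1"] assms(2,3) by simp

lemma slope_pos: "b (i - 1) < b i \<Longrightarrow> r i < r (i - 1) \<Longrightarrow> slope b r i > 0"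
  by (simp add: slope_def)

lemma diff_mult_slope: "r i \<noteq> r (i - 1) \<Longrightarrow> (r (i - 1) - r i) * slope b r i = b i - b (i - 1)"
  by (simp add: slope_def)

lemma exp_total_hat_profile:
  assumes k: "k \<ge> 1"
    and b: "\<And>i. i < k \<Longrightarrow> b i < b (i + 1)"
    and r: "\<And>i. i < k \<Longrightarrow> r i > r (i + 1)"
    and rk: "r k = 0"
    and t: "t \<ge> 0"
  shows "exp_total k b r (hat_profile k b r) t
           = b 0 + exp 1 / (exp 1 - 1) * (\<Sum>i=1..k. (r (i - 1) - r i) * min (slope b r i) t)"
proof -
  define c :: real where "c = exp 1 / (exp 1 - 1)"
  define dr where "dr i = r (i - 1) - r i" for i
  define s where "s i = slope b r i" for i
  have r_step: "r i < r (i - 1)" if "i \<in> {1..k}" for i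
    using step_rel_pred[where R = "\<lambda>m n. r n < r m", OF r] that by simp
  have s_pos: "s i > 0" if "i \<in> {1..k}" for i
    using that step_rel_pred[where R = "\<lambda>m n. b m < b n", OF b] r_step
    by (auto simp: s_def intro: slope_pos)
  have buy: "exp_buy k b (hat_profile k b r) t = b 0 + (\<Sum>i=1..k. dr i * (s i * exp_ramp (s i) t))"
    unfolding exp_buy_def sum_hat_profile[OF k]
  proof (intro arg_cong2[where f = "(+)"] refl sum.cong)
    fix i assume "i \<in> {1..k}"
    then have "dr i * s i = b i - b (i - 1)"
      using r_step diff_mult_slope by (fastforce simp: dr_def s_def)
    then show "p1 b r i t * (b i - b (i - 1)) = dr i * (s i * exp_ramp (s i) t)"
      unfolding p1_eq_exp_ramp s_def[symmetric] by (metis mult.assoc mult.commute)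
  qed
  have r0: "r 0 = (\<Sum>i=1..k. dr i)"
    using sum_telescope''[of 0 k "\<lambda>i. - r i"] rk by (simp add: dr_def)
  have rate: "exp_rate k r (hat_profile k b r) z = (\<Sum>i=1..k. dr i * (1 - exp_ramp (s i) z))" for z
  proof -
    have "exp_rate k r (hat_profile k b r) z
            = (\<Sum>i=1..k. dr i) + (\<Sum>i=1..k. exp_ramp (s i) z * - dr i)"
      unfolding exp_rate_def sum_hat_profile[OF k] r0 by (simp add: dr_def s_def p1_eq_exp_ramp)
    also have "\<dots> = (\<Sum>i=1..k. dr i * (1 - exp_ramp (s i) z))"
      by (simp add: algebra_simps flip: sum.distrib)
    finally show ?thesis .
  qed
  have "((\<lambda>z. exp_rate k r (hat_profile k b r) z) has_integral
          (\<Sum>i=1..k. dr i * (c * min (s i) t - s i * exp_ramp (s i) t))) {0..t}"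
    unfolding rate c_def
    by (intro has_integral_sum has_integral_mult_right has_integral_one_minus_exp_ramp s_pos t) auto
  then have "exp_total k b r (hat_profile k b r) t
               = b 0 + ((\<Sum>i=1..k. dr i * (s i * exp_ramp (s i) t))
                     + (\<Sum>i=1..k. dr i * (c * min (s i) t - s i * exp_ramp (s i) t)))"
    unfolding exp_total_def buy by (simp add: integral_unique)
  also have "\<dots> = b 0 + c * (\<Sum>i=1..k. dr i * min (s i) t)"
    by (simp add: sum_distrib_left algebra_simps flip: sum.distrib)
  finally show ?thesis
    by (simp add: c_def dr_def s_def)
qed

lemma sum_diff_mult_min_slope_le:
  assumes r: "\<And>i. i < k \<Longrightarrow> r i > r (i + 1)"
    and rk: "r k = 0"
    and j: "j \<le> k"
  shows "(\<Sum>i=1..k. (r (i - 1) - r i) * min (slope b r i) t) \<le> b j - b 0 + r j * t"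
proof -
  have dr: "0 \<le> r (i - 1) - r i" if "1 \<le> i" and "i \<le> k" for i
    using step_rel_pred[where R = "\<lambda>m n. r n < r m", OF r] that by fastforce
  have "{1..k} = {1..j} \<union> {Suc j..k}"
    using j by auto
  then have "(\<Sum>i=1..k. (r (i - 1) - r i) * min (slope b r i) t)
               = (\<Sum>i=1..j. (r (i - 1) - r i) * min (slope b r i) t)
                 + (\<Sum>i=Suc j..k. (r (i - 1) - r i) * min (slope b r i) t)"
    by (simp add: sum.union_disjoint)
  also have "\<dots> \<le> (\<Sum>i=1..j. (r (i - 1) - r i) * slope b r i) + (\<Sum>i=Suc j..k. (r (i - 1) - r i) * t)"
    using dr j by (intro add_mono sum_mono mult_left_mono) auto
  also have "(\<Sum>i=1..j. (r (i - 1) - r i) * slope b r i) = (\<Sum>i=1..j. b i - b (i - 1))"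
    using j step_rel_pred[where R = "\<lambda>m n. r n < r m", OF r]
    by (intro sum.cong refl diff_mult_slope) fastforce
  also have "\<dots> = b j - b 0"
    using sum_telescope''[of 0 j b] by simp
  also have "(\<Sum>i=Suc j..k. (r (i - 1) - r i) * t) = r j * t"
    using sum_telescope''[of j k "\<lambda>i. - r i"] rk j by (simp flip: sum_distrib_right)
  finally show ?thesis .
qed

theorem theorem3p4:
  fixes k :: nat and b r :: "nat \<Rightarrow> real" and t :: real
  assumes "k \<ge> 1"
    and "0 \<le> b 0"
    and "\<And>i. i < k \<Longrightarrow> b i < b (i + 1)"
    and "\<And>i. i < k \<Longrightarrow> r i > r (i + 1)"
    and "r k = 0"
    and "\<And>i. 1 \<le> i \<Longrightarrow> i < k \<Longrightarrow> slope b r i < slope b r (i + 1)"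
    and "t \<ge> 0"
  shows "exp_total k b r (hat_profile k b r) t \<le> exp 1 / (exp 1 - 1) * opt_cost k b r t"
proof -
  define c :: real where "c = exp 1 / (exp 1 - 1)"
  have "opt_cost k b r t \<in> (\<lambda>i. b i + r i * t) ` {0..k}"
    unfolding opt_cost_def by (rule Min_in) auto
  then obtain j where j: "j \<le> k" and opt: "opt_cost k b r t = b j + r j * t"
    by auto
  have "c \<ge> 1"
    by (simp add: c_def)
  have "exp_total k b r (hat_profile k b r) t
          = b 0 + c * (\<Sum>i=1..k. (r (i - 1) - r i) * min (slope b r i) t)"
    unfolding c_def by (intro exp_total_hat_profile) (use assms in auto)
  also have "\<dots> \<le> c * b 0 + c * (b j - b 0 + r j * t)"
    using sum_diff_mult_min_slope_le[OF assms(4,5) j] \<open>c \<ge> 1\<close> assms(2)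
    by (intro add_mono mult_left_mono) (auto intro: mult_right_mono[of 1 c, simplified])
  also have "\<dots> = c * opt_cost k b r t"
    by (simp add: opt algebra_simps)
  finally show ?thesis
    by (simp add: c_def)
qed

end
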